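(* Let $n\ge3$, $\mathcal H=(\mathbb C^2)^{\otimes n}$, with nearest-neighbor neighborhoods $\mathcal N_k=\{k,k+1\}$, $k=1,\dots,n-1$. Let $D=|00\rangle\langle10|+|11\rangle\langle01|$ on $\mathbb C^2\otimes\mathbb C^2$ and $D_k=D$ acting on qubits $k,k+1$ tensored with the identity on the others. Let $\mathcal H'$ be the $+1$-eigenspace of $\sigma_x^{\otimes n}$ (of dimension $2^{n-1}$). Then for every density operator $\rho_0$ supported in $\mathcal H'$, $e^{\mathcal L(0,\{D_k\})t}(\rho_0)\to|\Psi_{\mathrm{GHZ}}\rangle\langle\Psi_{\mathrm{GHZ}}|$ as $t\to\infty$, where $|\Psi_{\mathrm{GHZ}}\rangle=(|0\rangle^{\otimes n}+|1\rangle^{\otimes n})/\sqrt2$; i.e. the GHZ state is $\mathcal H'$-DQLS.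
   Context: $\sigma_x$ is the Pauli $x$ matrix; $\{|0\rangle,|1\rangle\}$ is the computational basis. $\mathcal L(0,\{D_k\})(\rho)=\sum_k(D_k\rho D_k^\dagger-\frac12\{D_k^\dagger D_k,\rho\})$. *)

theory Defs
  imports "HOL-Analysis.Analysis" "Jordan_Normal_Form.Schur_Decomposition"
begin

text \<open>n qubits; computational basis states |b_1 ... b_n> are indexed by
  i = sum_k b_k 2^(n-k), i < 2^n.  qbit n k i is the value b_k of qubit k (1 \<le> k \<le> n).\<close>

definition qbit :: "nat \<Rightarrow> nat \<Rightarrow> nat \<Rightarrow> nat" where
  "qbit n k i = (i div 2 ^ (n - k)) mod 2"

text \<open>D = |00><10| + |11><01| on C^2 \<otimes> C^2, two-qubit basis index 2*a+b for |ab>.\<close>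
definition Dloc :: "nat \<Rightarrow> nat \<Rightarrow> complex" where
  "Dloc a b = (if (a = 0 \<and> b = 2) \<or> (a = 3 \<and> b = 1) then 1 else 0)"

definition Dk :: "nat \<Rightarrow> nat \<Rightarrow> complex mat" where
  "Dk n k = mat (2 ^ n) (2 ^ n) (\<lambda>(i, j).
     if (\<forall>q \<in> {1..n} - {k, k + 1}. qbit n q i = qbit n q j)
     then Dloc (2 * qbit n k i + qbit n (k + 1) i) (2 * qbit n k j + qbit n (k + 1) j)
     else 0)"

definition sigmax_n :: "nat \<Rightarrow> complex mat" where
  "sigmax_n n = mat (2 ^ n) (2 ^ n) (\<lambda>(i, j).
     if (\<forall>q \<in> {1..n}. qbit n q i \<noteq> qbit n q j) then 1 else 0)"

definition mtrace :: "complex mat \<Rightarrow> complex" where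
  "mtrace A = (\<Sum>i < dim_row A. A $$ (i, i))"

definition density_op :: "nat \<Rightarrow> complex mat \<Rightarrow> bool" where
  "density_op N \<rho> \<longleftrightarrow> \<rho> \<in> carrier_mat N N \<and> mat_adjoint \<rho> = \<rho> \<and>
     (\<forall>v \<in> carrier_vec N. 0 \<le> Re (conjugate v \<bullet> (\<rho> *\<^sub>v v))) \<and> mtrace \<rho> = 1"

text \<open>Support (= range, for Hermitian \<rho>) contained in the +1 eigenspace of sigma_x^{\<otimes> n}.\<close>
definition supported_in_Hplus :: "nat \<Rightarrow> complex mat \<Rightarrow> bool" where
  "supported_in_Hplus n \<rho> \<longleftrightarrow>
     (\<forall>v \<in> carrier_vec (2 ^ n). sigmax_n n *\<^sub>v (\<rho> *\<^sub>v v) = \<rho> *\<^sub>v v)"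

definition lindblad_term :: "complex mat \<Rightarrow> complex mat \<Rightarrow> complex mat" where
  "lindblad_term D \<rho> = D * \<rho> * mat_adjoint D
     - (1/2 :: complex) \<cdot>\<^sub>m (mat_adjoint D * D * \<rho> + \<rho> * (mat_adjoint D * D))"

definition lindblad :: "nat \<Rightarrow> complex mat \<Rightarrow> complex mat" where
  "lindblad n \<rho> = mat (2 ^ n) (2 ^ n) (\<lambda>(i, j).
     \<Sum>k \<in> {1..n-1}. lindblad_term (Dk n k) \<rho> $$ (i, j))"

definition lindblad_evol :: "nat \<Rightarrow> real \<Rightarrow> complex mat \<Rightarrow> complex mat" where
  "lindblad_evol n t \<rho> = mat (2 ^ n) (2 ^ n) (\<lambda>(i, j).
     \<Sum>m. (complex_of_real (t ^ m / fact m)) * (((lindblad n) ^^ m) \<rho>) $$ (i, j))"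

definition ghz_vec :: "nat \<Rightarrow> complex vec" where
  "ghz_vec n = vec (2 ^ n) (\<lambda>i. if i = 0 \<or> i = 2 ^ n - 1 then complex_of_real (1 / sqrt 2) else 0)"

definition ghz_proj :: "nat \<Rightarrow> complex mat" where
  "ghz_proj n = mat (2 ^ n) (2 ^ n) (\<lambda>(i, j). ghz_vec n $ i * cnj (ghz_vec n $ j))"

end

theory Submission
  imports Defs
begin

text \<open>Entrywise, \<open>L(\<rho>)(i, j)\<close> is a sum of entries \<open>\<rho>(flip\<^sub>k i, flip\<^sub>k j)\<close>, over the
  positions \<open>k\<close> at which both \<open>i\<close> and \<open>j\<close> have no domain wall, minus \<open>\<lambda>(i, j) \<rho>(i, j)\<close>, where
  \<open>\<lambda>(i, j) > 0\<close> as soon as \<open>i\<close> or \<open>j\<close> has a domain wall.  Flipping qubit \<open>k\<close> creates a wall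
  at \<open>k\<close> and removes at most the one at \<open>k - 1\<close>, so it strictly increases the sum of the wall
  positions; by induction on the distance of this potential from its maximum and variation of
  constants, every entry whose row or column index has a domain wall tends to \<open>0\<close>.  This leaves
  the four entries indexed by \<open>|0\<dots>0\<rangle>\<close> and \<open>|1\<dots>1\<rangle>\<close>.  Support in the \<open>+1\<close> eigenspace of
  \<open>\<sigma>\<^sub>x\<^sup>\<otimes>\<^sup>n\<close> makes \<open>\<rho>\<close> invariant under flipping all qubits of the row or of the column
  index; the evolution preserves this invariance, so the four entries agree, and as the trace is
  preserved they tend to \<open>1/2\<close>.\<close>

lemma qbit_eq_of_bool_bit: "qbit n q i = of_bool (bit i (n - q))"
  unfolding qbit_def bit_iff_odd by (simp add: odd_iff_mod_2_eq_one)

lemma qbit_cases: "qbit n q i = 0 \<or> qbit n q i = 1"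
  by (simp add: qbit_eq_of_bool_bit)

lemma qbit_eqI:
  assumes "i < 2 ^ n" "j < 2 ^ n" "\<And>q. q \<in> {1..n} \<Longrightarrow> qbit n q i = qbit n q j"
  shows "i = j"
proof (rule bit_eqI)
  fix p
  show "bit i p = bit j p"
  proof (cases "p < n")
    case True
    then have "n - (n - p) = p" "n - p \<in> {1..n}" by auto
    with assms(3) show ?thesis by (metis qbit_eq_of_bool_bit of_bool_eq_iff)
  next
    case False
    with assms(1,2) show ?thesis by (metis bit_take_bit_iff take_bit_nat_eq_self_iff)
  qed
qed

lemma xor_less_power:
  fixes a b :: nat
  assumes "a < 2 ^ n" "b < 2 ^ n"
  shows "xor a b < 2 ^ n"
  using assms by (metis take_bit_nat_eq_self_iff take_bit_xor)

definition flip_qubit :: "nat \<Rightarrow> nat \<Rightarrow> nat \<Rightarrow> nat" where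
  "flip_qubit n k i = xor i (2 ^ (n - k))"

definition flip_all :: "nat \<Rightarrow> nat \<Rightarrow> nat" where
  "flip_all n i = xor i (mask n)"

lemma flip_qubit_less: "i < 2 ^ n \<Longrightarrow> 1 \<le> k \<Longrightarrow> k \<le> n \<Longrightarrow> flip_qubit n k i < 2 ^ n"
  unfolding flip_qubit_def by (rule xor_less_power) auto

lemma flip_all_less: "i < 2 ^ n \<Longrightarrow> flip_all n i < 2 ^ n"
  unfolding flip_all_def by (rule xor_less_power) (simp_all add: mask_eq_exp_minus_1)

lemma flip_qubit_flip_qubit [simp]: "flip_qubit n k (flip_qubit n k i) = i"
  by (simp add: flip_qubit_def xor.assoc)

lemma flip_all_flip_all [simp]: "flip_all n (flip_all n i) = i"
  by (simp add: flip_all_def xor.assoc)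

lemma flip_qubit_flip_all: "flip_qubit n k (flip_all n i) = flip_all n (flip_qubit n k i)"
  by (simp add: flip_qubit_def flip_all_def xor.assoc xor.commute xor.left_commute)

lemma qbit_flip_qubit:
  assumes "q \<in> {1..n}" "k \<in> {1..n}"
  shows "qbit n q (flip_qubit n k i) = (if q = k then 1 - qbit n q i else qbit n q i)"
proof -
  have "n - q = n - k \<longleftrightarrow> q = k" using assms by auto
  then show ?thesis by (auto simp: qbit_eq_of_bool_bit flip_qubit_def bit_xor_iff bit_exp_iff)
qed

lemma qbit_flip_all: "q \<in> {1..n} \<Longrightarrow> qbit n q (flip_all n i) = 1 - qbit n q i"
  by (auto simp: qbit_eq_of_bool_bit flip_all_def bit_xor_iff bit_mask_iff)

text \<open>\<open>\<not> aligned n k i\<close> means that \<open>|i\<rangle>\<close> has a domain wall between qubits \<open>k\<close> and \<open>k + 1\<close>.\<close>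

definition aligned :: "nat \<Rightarrow> nat \<Rightarrow> nat \<Rightarrow> bool" where
  "aligned n k i \<longleftrightarrow> qbit n k i = qbit n (k + 1) i"

lemma aligned_flip_qubit: "k \<in> {1..n-1} \<Longrightarrow> aligned n k (flip_qubit n k i) \<longleftrightarrow> \<not> aligned n k i"
  using qbit_cases[of n k i] qbit_cases[of n "k + 1" i]
  by (auto simp: aligned_def qbit_flip_qubit)

lemma aligned_flip_all: "k \<in> {1..n-1} \<Longrightarrow> aligned n k (flip_all n i) \<longleftrightarrow> aligned n k i"
  using qbit_cases[of n k i] qbit_cases[of n "k + 1" i]
  by (auto simp: aligned_def qbit_flip_all)

lemma qbit_zero [simp]: "qbit n q 0 = 0"
  by (simp add: qbit_def)

lemma qbit_mask: "q \<in> {1..n} \<Longrightarrow> qbit n q (mask n) = 1"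
  by (auto simp: qbit_eq_of_bool_bit bit_mask_iff)

lemma exists_domain_wall:
  assumes "i < 2 ^ n" "i \<noteq> 0" "i \<noteq> mask n"
  shows "\<exists>k\<in>{1..n-1}. \<not> aligned n k i"
proof (rule ccontr)
  assume no_wall: "\<not> ?thesis"
  have from_first: "qbit n (Suc q) i = qbit n 1 i" if "Suc q \<le> n" for q
    using that
  proof (induction q)
    case (Suc q)
    then have "aligned n (Suc q) i" using no_wall by auto
    with Suc show ?case by (simp add: aligned_def)
  qed simp
  have const: "qbit n q i = qbit n 1 i" if "q \<in> {1..n}" for q
    using from_first[of "q - 1"] that by simp
  show False
  proof (cases "qbit n 1 i = 0")
    case True
    then have "i = 0"
      using const by (intro qbit_eqI[OF assms(1)]) simp_all
    with assms(2) show False ..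
  next
    case False
    then have "i = mask n"
      using const qbit_cases[of n 1 i] qbit_mask[of _ n]
      by (intro qbit_eqI[OF assms(1)]) (simp_all add: mask_eq_exp_minus_1)
    with assms(3) show False ..
  qed
qed

text \<open>\<open>D\<^sub>k\<close> removes the wall at \<open>k\<close> and creates at most one at \<open>k - 1\<close>, so it strictly
  decreases this potential.\<close>

definition wall_potential :: "nat \<Rightarrow> nat \<Rightarrow> nat" where
  "wall_potential n i = (\<Sum>k\<in>{1..n-1}. if aligned n k i then 0 else k)"

lemma wall_potential_le: "wall_potential n i \<le> (\<Sum>k\<in>{1..n-1}. k)"
  unfolding wall_potential_def by (rule sum_mono) auto

lemma wall_potential_flip_qubit:
  assumes k: "k \<in> {1..n-1}" and "aligned n k i"
  shows "wall_potential n i < wall_potential n (flip_qubit n k i)"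
proof -
  let ?j = "flip_qubit n k i"
  have pointwise: "(if aligned n l i then 0 else l) + (if l = k then k else 0)
      \<le> (if aligned n l ?j then 0 else l) + (if l = k - 1 then k - 1 else 0)"
    if l: "l \<in> {1..n-1}" for l
  proof -
    have "aligned n l ?j \<longleftrightarrow> aligned n l i" if "l \<noteq> k" "l \<noteq> k - 1"
      using that l k by (auto simp: aligned_def qbit_flip_qubit)
    then show ?thesis using aligned_flip_qubit[OF k, of i] \<open>aligned n k i\<close> by auto
  qed
  have "wall_potential n i + k
      = (\<Sum>l\<in>{1..n-1}. (if aligned n l i then 0 else l) + (if l = k then k else 0))"
    using k unfolding wall_potential_def sum.distrib by simp
  also have "\<dots> \<le> (\<Sum>l\<in>{1..n-1}. (if aligned n l ?j then 0 else l) + (if l = k - 1 then k - 1 else 0))"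
    by (rule sum_mono) (rule pointwise)
  also have "\<dots> \<le> wall_potential n ?j + (k - 1)"
    unfolding wall_potential_def sum.distrib by (simp add: sum.delta)
  finally show ?thesis using k by arith
qed

lemma index_mult_mat_square:
  assumes "A \<in> carrier_mat N N" "B \<in> carrier_mat N N" "i < N" "j < N"
  shows "(A * B) $$ (i, j) = (\<Sum>l<N. A $$ (i, l) * B $$ (l, j))"
  using assms by (simp add: scalar_prod_def atLeast0LessThan)

lemma mat_adjoint_carrier: "A \<in> carrier_mat N N \<Longrightarrow> mat_adjoint A \<in> carrier_mat N N"
  unfolding mat_adjoint_def by auto

lemma index_mat_adjoint:
  "A \<in> carrier_mat N N \<Longrightarrow> i < N \<Longrightarrow> j < N \<Longrightarrow> mat_adjoint A $$ (i, j) = cnj (A $$ (j, i))"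
  unfolding mat_adjoint_def by (simp add: mat_of_rows_def)

lemma Dloc_bits:
  assumes "x \<le> 1" "y \<le> 1" "u \<le> 1" "v \<le> 1"
  shows "Dloc (2 * x + y) (2 * u + v) = (if x = y \<and> v = y \<and> u \<noteq> x then 1 else 0)"
  using assms unfolding Dloc_def by (cases x; cases y; cases u; cases v) auto

lemma Dk_carrier: "Dk n k \<in> carrier_mat (2 ^ n) (2 ^ n)"
  unfolding Dk_def by simp

lemma index_Dk:
  assumes "i < 2 ^ n" "a < 2 ^ n" "k \<in> {1..n-1}"
  shows "Dk n k $$ (i, a) = (if aligned n k i \<and> a = flip_qubit n k i then 1 else 0)"
proof -
  have kn: "k \<in> {1..n}" "k + 1 \<in> {1..n}" using assms(3) by auto
  have qbit_le: "qbit n q j \<le> 1" for q j using qbit_cases[of n q j] by auto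
  let ?same_outside = "\<forall>q \<in> {1..n} - {k, k + 1}. qbit n q i = qbit n q a"
  let ?local = "qbit n k i = qbit n (k + 1) i \<and> qbit n (k + 1) a = qbit n (k + 1) i \<and> qbit n k a \<noteq> qbit n k i"
  have "Dk n k $$ (i, a) = (if ?same_outside \<and> ?local then 1 else 0)"
    unfolding Dk_def using assms(1,2)
    by (simp only: index_mat split Dloc_bits[OF qbit_le qbit_le qbit_le qbit_le] if_if_eq_conj)
  moreover have "?same_outside \<and> ?local \<longleftrightarrow> aligned n k i \<and> a = flip_qubit n k i"
  proof
    assume lhs: "?same_outside \<and> ?local"
    have "qbit n q a = qbit n q (flip_qubit n k i)" if q: "q \<in> {1..n}" for q
    proof -
      consider "q = k" | "q = k + 1" | "q \<in> {1..n} - {k, k + 1}" using q by auto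
      then show ?thesis
      proof cases
        case 1
        have "qbit n k (flip_qubit n k i) = 1 - qbit n k i"
          using qbit_flip_qubit[OF kn(1) kn(1)] by simp
        then show ?thesis using 1 lhs qbit_cases[of n k i] qbit_cases[of n k a] by auto
      next
        case 2
        then show ?thesis using lhs qbit_flip_qubit[OF kn(2) kn(1)] by simp
      next
        case 3
        then have "q \<noteq> k" by auto
        then show ?thesis using 3 lhs qbit_flip_qubit[OF q kn(1)] by simp
      qed
    qed
    then have "a = flip_qubit n k i"
      using assms(3) by (intro qbit_eqI[OF assms(2) flip_qubit_less[OF assms(1)]]) auto
    with lhs show "aligned n k i \<and> a = flip_qubit n k i" by (simp add: aligned_def)
  next
    assume rhs: "aligned n k i \<and> a = flip_qubit n k i"
    have "qbit n q a = qbit n q i" if "q \<in> {1..n}" "q \<noteq> k" for q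
      using that rhs qbit_flip_qubit[OF that(1) kn(1)] by simp
    moreover have "qbit n k a \<noteq> qbit n k i"
      using rhs qbit_cases[of n k i] qbit_flip_qubit[OF kn(1) kn(1)] by auto
    ultimately show "?same_outside \<and> ?local" using rhs kn by (auto simp: aligned_def)
  qed
  ultimately show ?thesis by argo
qed

lemma index_Dk_transposed:
  assumes "i < 2 ^ n" "a < 2 ^ n" "k \<in> {1..n-1}"
  shows "Dk n k $$ (i, a) = (if \<not> aligned n k a \<and> i = flip_qubit n k a then 1 else 0)"
  using index_Dk[OF assms] aligned_flip_qubit[OF assms(3)] by (metis flip_qubit_flip_qubit)

lemma sum_Dk_row:
  assumes "i < 2 ^ n" "k \<in> {1..n-1}"
  shows "(\<Sum>a<2 ^ n. Dk n k $$ (i, a) * f a) = (if aligned n k i then f (flip_qubit n k i) else 0)"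
proof -
  have "(\<Sum>a<2 ^ n. Dk n k $$ (i, a) * f a)
      = (\<Sum>a<2 ^ n. if aligned n k i \<and> a = flip_qubit n k i then f a else 0)"
    by (intro sum.cong refl) (use assms in \<open>simp add: index_Dk\<close>)
  moreover have "flip_qubit n k i < 2 ^ n" using assms by (intro flip_qubit_less) auto
  ultimately show ?thesis by (simp add: sum.delta')
qed

lemma sum_Dk_col:
  assumes "a < 2 ^ n" "k \<in> {1..n-1}"
  shows "(\<Sum>i<2 ^ n. Dk n k $$ (i, a) * f i) = (if aligned n k a then 0 else f (flip_qubit n k a))"
proof -
  have "(\<Sum>i<2 ^ n. Dk n k $$ (i, a) * f i)
      = (\<Sum>i<2 ^ n. if \<not> aligned n k a \<and> i = flip_qubit n k a then f i else 0)"
    by (intro sum.cong refl) (use assms in \<open>simp add: index_Dk_transposed\<close>)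
  moreover have "flip_qubit n k a < 2 ^ n" using assms by (intro flip_qubit_less) auto
  ultimately show ?thesis by (simp add: sum.delta')
qed

lemma cnj_index_Dk:
  "i < 2 ^ n \<Longrightarrow> a < 2 ^ n \<Longrightarrow> k \<in> {1..n-1} \<Longrightarrow> cnj (Dk n k $$ (i, a)) = Dk n k $$ (i, a)"
  by (simp add: index_Dk)

lemma index_adjoint_Dk_mult_Dk:
  assumes "a < 2 ^ n" "b < 2 ^ n" "k \<in> {1..n-1}"
  shows "(mat_adjoint (Dk n k) * Dk n k) $$ (a, b) = (if \<not> aligned n k a \<and> b = a then 1 else 0)"
proof -
  have "(mat_adjoint (Dk n k) * Dk n k) $$ (a, b)
      = (\<Sum>l<2 ^ n. mat_adjoint (Dk n k) $$ (a, l) * Dk n k $$ (l, b))"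
    by (rule index_mult_mat_square[OF mat_adjoint_carrier[OF Dk_carrier] Dk_carrier assms(1,2)])
  also have "\<dots> = (\<Sum>l<2 ^ n. Dk n k $$ (l, a) * Dk n k $$ (l, b))"
    by (intro sum.cong refl) (use assms in \<open>simp add: index_mat_adjoint[OF Dk_carrier] cnj_index_Dk\<close>)
  also have "\<dots> = (if aligned n k a then 0 else Dk n k $$ (flip_qubit n k a, b))"
    by (rule sum_Dk_col[OF assms(1,3)])
  also have "\<dots> = (if \<not> aligned n k a \<and> b = a then 1 else 0)"
    using assms flip_qubit_less[OF assms(1), of k] aligned_flip_qubit[OF assms(3), of a]
    by (auto simp: index_Dk)
  finally show ?thesis .
qed

lemma index_lindblad_term:
  assumes "D \<in> carrier_mat N N" "\<rho> \<in> carrier_mat N N" "i < N" "j < N"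
  shows "lindblad_term D \<rho> $$ (i, j) = (D * \<rho> * mat_adjoint D) $$ (i, j)
    - 1/2 * ((mat_adjoint D * D * \<rho>) $$ (i, j) + (\<rho> * (mat_adjoint D * D)) $$ (i, j))"
  using assms mat_adjoint_carrier[OF assms(1)] by (simp add: lindblad_term_def)

lemma index_Dk_mult_mult_adjoint:
  assumes "\<rho> \<in> carrier_mat (2 ^ n) (2 ^ n)" "i < 2 ^ n" "j < 2 ^ n" "k \<in> {1..n-1}"
  shows "(Dk n k * \<rho> * mat_adjoint (Dk n k)) $$ (i, j) =
    (if aligned n k i \<and> aligned n k j then \<rho> $$ (flip_qubit n k i, flip_qubit n k j) else 0)"
proof -
  let ?D = "Dk n k"
  have D\<rho>: "?D * \<rho> \<in> carrier_mat (2 ^ n) (2 ^ n)" by (rule mult_carrier_mat[OF Dk_carrier assms(1)])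
  have "(?D * \<rho>) $$ (i, b) = (if aligned n k i then \<rho> $$ (flip_qubit n k i, b) else 0)"
    if "b < 2 ^ n" for b
    using index_mult_mat_square[OF Dk_carrier assms(1) assms(2) that] sum_Dk_row[OF assms(2,4)] by simp
  moreover have "flip_qubit n k j < 2 ^ n" using assms by (intro flip_qubit_less) auto
  moreover have "(?D * \<rho> * mat_adjoint ?D) $$ (i, j) = (\<Sum>b<2 ^ n. ?D $$ (j, b) * (?D * \<rho>) $$ (i, b))"
    using assms mat_adjoint_carrier[OF Dk_carrier[of n k]]
    by (simp add: index_mult_mat_square[OF D\<rho>] index_mat_adjoint[OF Dk_carrier] cnj_index_Dk
        mult.commute)
  ultimately show ?thesis using assms by (simp add: sum_Dk_row)
qed

lemma index_adjoint_Dk_mult_Dk_mult: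
  assumes "\<rho> \<in> carrier_mat (2 ^ n) (2 ^ n)" "i < 2 ^ n" "j < 2 ^ n" "k \<in> {1..n-1}"
  shows "(mat_adjoint (Dk n k) * Dk n k * \<rho>) $$ (i, j) = of_bool (\<not> aligned n k i) * \<rho> $$ (i, j)"
proof -
  have "mat_adjoint (Dk n k) * Dk n k \<in> carrier_mat (2 ^ n) (2 ^ n)"
    by (rule mult_carrier_mat[OF mat_adjoint_carrier[OF Dk_carrier] Dk_carrier])
  then have "(mat_adjoint (Dk n k) * Dk n k * \<rho>) $$ (i, j)
      = (\<Sum>a<2 ^ n. (mat_adjoint (Dk n k) * Dk n k) $$ (i, a) * \<rho> $$ (a, j))"
    by (rule index_mult_mat_square[OF _ assms(1-3)])
  also have "\<dots> = (\<Sum>a<2 ^ n. if a = i then of_bool (\<not> aligned n k i) * \<rho> $$ (a, j) else 0)"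
    by (intro sum.cong refl) (use assms in \<open>auto simp: index_adjoint_Dk_mult_Dk\<close>)
  finally show ?thesis using assms by (simp add: sum.delta')
qed

lemma index_mult_adjoint_Dk_mult_Dk:
  assumes "\<rho> \<in> carrier_mat (2 ^ n) (2 ^ n)" "i < 2 ^ n" "j < 2 ^ n" "k \<in> {1..n-1}"
  shows "(\<rho> * (mat_adjoint (Dk n k) * Dk n k)) $$ (i, j) = of_bool (\<not> aligned n k j) * \<rho> $$ (i, j)"
proof -
  have "mat_adjoint (Dk n k) * Dk n k \<in> carrier_mat (2 ^ n) (2 ^ n)"
    by (rule mult_carrier_mat[OF mat_adjoint_carrier[OF Dk_carrier] Dk_carrier])
  then have "(\<rho> * (mat_adjoint (Dk n k) * Dk n k)) $$ (i, j)
      = (\<Sum>a<2 ^ n. \<rho> $$ (i, a) * (mat_adjoint (Dk n k) * Dk n k) $$ (a, j))"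
    by (rule index_mult_mat_square[OF assms(1) _ assms(2,3)])
  also have "\<dots> = (\<Sum>a<2 ^ n. if a = j then of_bool (\<not> aligned n k j) * \<rho> $$ (i, a) else 0)"
    by (intro sum.cong refl) (use assms in \<open>auto simp: index_adjoint_Dk_mult_Dk\<close>)
  finally show ?thesis using assms by (simp add: sum.delta')
qed

lemma index_lindblad_term_Dk:
  assumes "\<rho> \<in> carrier_mat (2 ^ n) (2 ^ n)" "i < 2 ^ n" "j < 2 ^ n" "k \<in> {1..n-1}"
  shows "lindblad_term (Dk n k) \<rho> $$ (i, j) =
    (if aligned n k i \<and> aligned n k j then \<rho> $$ (flip_qubit n k i, flip_qubit n k j) else 0)
    - of_real ((of_bool (\<not> aligned n k i) + of_bool (\<not> aligned n k j)) / 2) * \<rho> $$ (i, j)"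
  unfolding index_lindblad_term[OF Dk_carrier assms(1-3)] index_Dk_mult_mult_adjoint[OF assms]
    index_adjoint_Dk_mult_Dk_mult[OF assms] index_mult_adjoint_Dk_mult_Dk[OF assms]
  by (simp add: of_bool_def field_simps)

definition jump_term :: "nat \<Rightarrow> complex mat \<Rightarrow> nat \<Rightarrow> nat \<Rightarrow> complex" where
  "jump_term n \<rho> i j = (\<Sum>k\<in>{1..n-1}.
     if aligned n k i \<and> aligned n k j then \<rho> $$ (flip_qubit n k i, flip_qubit n k j) else 0)"

definition decay_rate :: "nat \<Rightarrow> nat \<Rightarrow> nat \<Rightarrow> real" where
  "decay_rate n i j = (\<Sum>k\<in>{1..n-1}. (of_bool (\<not> aligned n k i) + of_bool (\<not> aligned n k j)) / 2)"

lemma lindblad_carrier: "lindblad n \<rho> \<in> carrier_mat (2 ^ n) (2 ^ n)"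
  unfolding lindblad_def by simp

lemma index_lindblad:
  assumes "\<rho> \<in> carrier_mat (2 ^ n) (2 ^ n)" "i < 2 ^ n" "j < 2 ^ n"
  shows "lindblad n \<rho> $$ (i, j) = jump_term n \<rho> i j - of_real (decay_rate n i j) * \<rho> $$ (i, j)"
  using assms
  by (simp add: lindblad_def jump_term_def decay_rate_def index_lindblad_term_Dk
      sum_subtractf sum_distrib_right of_real_sum del: of_real_divide of_real_add)

lemma decay_rate_nonneg: "0 \<le> decay_rate n i j"
  unfolding decay_rate_def by (rule sum_nonneg) simp

lemma decay_rate_le: "decay_rate n i j \<le> real n"
proof -
  have "decay_rate n i j \<le> (\<Sum>k\<in>{1..n-1}. 1)"
    unfolding decay_rate_def by (rule sum_mono) simp
  also have "\<dots> \<le> real n" by simp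
  finally show ?thesis .
qed

lemma decay_rate_pos:
  assumes "k \<in> {1..n-1}" "\<not> aligned n k i \<or> \<not> aligned n k j"
  shows "0 < decay_rate n i j"
proof -
  have "(0::real) < (of_bool (\<not> aligned n k i) + of_bool (\<not> aligned n k j)) / 2"
    using assms(2) by auto
  also have "\<dots> \<le> decay_rate n i j"
    unfolding decay_rate_def by (rule member_le_sum) (use assms(1) in auto)
  finally show ?thesis .
qed

lemma decay_rate_flip_all:
  "decay_rate n (flip_all n i) j = decay_rate n i j"
  "decay_rate n i (flip_all n j) = decay_rate n i j"
  unfolding decay_rate_def by (auto intro!: sum.cong simp: aligned_flip_all)

lemma norm_jump_term_le:
  assumes "\<And>a b. a < 2 ^ n \<Longrightarrow> b < 2 ^ n \<Longrightarrow> norm (\<rho> $$ (a, b)) \<le> X"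
    and "i < 2 ^ n" "j < 2 ^ n" "0 \<le> X"
  shows "norm (jump_term n \<rho> i j) \<le> real n * X"
proof -
  have "norm (jump_term n \<rho> i j) \<le> (\<Sum>k\<in>{1..n-1}. X)"
    unfolding jump_term_def
  proof (rule sum_norm_le)
    fix k assume "k \<in> {1..n-1}"
    then have "flip_qubit n k i < 2 ^ n" "flip_qubit n k j < 2 ^ n"
      using assms(2,3) by (auto intro: flip_qubit_less)
    then show "norm (if aligned n k i \<and> aligned n k j then \<rho> $$ (flip_qubit n k i, flip_qubit n k j) else 0) \<le> X"
      using assms(1,4) by simp
  qed
  also have "\<dots> \<le> real n * X" using assms(4) by (simp add: mult_right_mono)
  finally show ?thesis .
qed

lemma norm_index_lindblad_le:
  assumes "\<rho> \<in> carrier_mat (2 ^ n) (2 ^ n)"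
    and "\<And>a b. a < 2 ^ n \<Longrightarrow> b < 2 ^ n \<Longrightarrow> norm (\<rho> $$ (a, b)) \<le> X"
    and "i < 2 ^ n" "j < 2 ^ n" "0 \<le> X"
  shows "norm (lindblad n \<rho> $$ (i, j)) \<le> 2 * real n * X"
proof -
  have "norm (lindblad n \<rho> $$ (i, j))
      \<le> norm (jump_term n \<rho> i j) + norm (of_real (decay_rate n i j) * \<rho> $$ (i, j))"
    unfolding index_lindblad[OF assms(1,3,4)] by (rule norm_triangle_ineq4)
  also have "\<dots> = norm (jump_term n \<rho> i j) + decay_rate n i j * norm (\<rho> $$ (i, j))"
    using decay_rate_nonneg[of n i j] by (simp add: norm_mult)
  also have "\<dots> \<le> real n * X + real n * X"
    using norm_jump_term_le[OF assms(2-5)] assms(2-5) decay_rate_le[of n i j] decay_rate_nonneg[of n i j]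
    by (intro add_mono mult_mono) auto
  finally show ?thesis by (simp add: algebra_simps)
qed

text \<open>The jump term only permutes diagonal entries: \<open>flip_qubit n k\<close> is a bijection between the
  states aligned at \<open>k\<close> and those with a wall at \<open>k\<close>.\<close>

lemma sum_jump_term_diag:
  assumes "\<rho> \<in> carrier_mat (2 ^ n) (2 ^ n)"
  shows "(\<Sum>i<2 ^ n. jump_term n \<rho> i i) = (\<Sum>i<2 ^ n. of_real (decay_rate n i i) * \<rho> $$ (i, i))"
proof -
  have "(\<Sum>i<2 ^ n. jump_term n \<rho> i i)
      = (\<Sum>k\<in>{1..n-1}. \<Sum>i<2 ^ n. if aligned n k i then \<rho> $$ (flip_qubit n k i, flip_qubit n k i) else 0)"
    unfolding jump_term_def by (simp only: conj_absorb) (rule sum.swap)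
  also have "\<dots> = (\<Sum>k\<in>{1..n-1}. \<Sum>i<2 ^ n. if \<not> aligned n k i then \<rho> $$ (i, i) else 0)"
  proof (rule sum.cong)
    fix k assume k: "k \<in> {1..n-1}"
    show "(\<Sum>i<2 ^ n. if aligned n k i then \<rho> $$ (flip_qubit n k i, flip_qubit n k i) else 0)
        = (\<Sum>i<2 ^ n. if \<not> aligned n k i then \<rho> $$ (i, i) else 0)"
      by (rule sum.reindex_bij_witness[of _ "flip_qubit n k" "flip_qubit n k"])
        (use k in \<open>auto intro: flip_qubit_less simp: aligned_flip_qubit\<close>)
  qed simp
  also have "\<dots> = (\<Sum>i<2 ^ n. of_real (decay_rate n i i) * \<rho> $$ (i, i))"
    unfolding decay_rate_def of_real_sum sum_distrib_right
    by (subst sum.swap) (auto intro!: sum.cong)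
  finally show ?thesis .
qed

lemma mtrace_lindblad: "\<rho> \<in> carrier_mat (2 ^ n) (2 ^ n) \<Longrightarrow> mtrace (lindblad n \<rho>) = 0"
  using lindblad_carrier[of n \<rho>]
  by (simp add: mtrace_def index_lindblad sum_subtractf sum_jump_term_diag)

definition flip_invariant :: "nat \<Rightarrow> complex mat \<Rightarrow> bool" where
  "flip_invariant n \<rho> \<longleftrightarrow> (\<forall>i<2 ^ n. \<forall>j<2 ^ n.
     \<rho> $$ (flip_all n i, j) = \<rho> $$ (i, j) \<and> \<rho> $$ (i, flip_all n j) = \<rho> $$ (i, j))"

lemma jump_term_flip_all:
  assumes "flip_invariant n \<rho>" "i < 2 ^ n" "j < 2 ^ n"
  shows "jump_term n \<rho> (flip_all n i) j = jump_term n \<rho> i j"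
    and "jump_term n \<rho> i (flip_all n j) = jump_term n \<rho> i j"
proof -
  have "\<rho> $$ (flip_all n (flip_qubit n k i), flip_qubit n k j) = \<rho> $$ (flip_qubit n k i, flip_qubit n k j)"
    "\<rho> $$ (flip_qubit n k i, flip_all n (flip_qubit n k j)) = \<rho> $$ (flip_qubit n k i, flip_qubit n k j)"
    if "k \<in> {1..n-1}" for k
    using assms that flip_qubit_less[of i n k] flip_qubit_less[of j n k]
    unfolding flip_invariant_def by auto
  then show "jump_term n \<rho> (flip_all n i) j = jump_term n \<rho> i j"
    and "jump_term n \<rho> i (flip_all n j) = jump_term n \<rho> i j"
    unfolding jump_term_def by (auto intro!: sum.cong simp: aligned_flip_all flip_qubit_flip_all)
qed

lemma flip_invariant_lindblad:
  assumes "\<rho> \<in> carrier_mat (2 ^ n) (2 ^ n)" "flip_invariant n \<rho>"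
  shows "flip_invariant n (lindblad n \<rho>)"
  using assms flip_all_less
  by (auto simp: flip_invariant_def index_lindblad jump_term_flip_all decay_rate_flip_all)

lemma summable_exp_series_bounded:
  fixes c :: "nat \<Rightarrow> 'a::{real_normed_field, banach}"
  assumes "\<And>m. norm (c m) \<le> X * K ^ m" "0 \<le> K"
  shows "summable (\<lambda>m. of_real (t ^ m / fact m) * c m)"
proof (rule summable_comparison_test')
  show "summable (\<lambda>m. X * (inverse (fact m) * (K * \<bar>t\<bar>) ^ m))"
    by (intro summable_mult summable_exp)
  fix m
  have "norm (of_real (t ^ m / fact m) * c m) = \<bar>t\<bar> ^ m / fact m * norm (c m)"
    by (simp only: norm_mult norm_of_real) (simp add: power_abs)
  also have "\<dots> \<le> \<bar>t\<bar> ^ m / fact m * (X * K ^ m)"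
    by (intro mult_left_mono assms) auto
  also have "\<dots> = X * (inverse (fact m) * (K * \<bar>t\<bar>) ^ m)"
    by (simp add: power_mult_distrib field_simps)
  finally show "norm (of_real (t ^ m / fact m) * c m) \<le> X * (inverse (fact m) * (K * \<bar>t\<bar>) ^ m)" .
qed

lemma has_vector_derivative_exp_series:
  fixes c :: "nat \<Rightarrow> 'a::{real_normed_field, banach}"
  assumes bound: "\<And>m. norm (c m) \<le> X * K ^ m" and "0 \<le> K"
  shows "((\<lambda>t. \<Sum>m. of_real (t ^ m / fact m) * c m) has_vector_derivative
          (\<Sum>m. of_real (t ^ m / fact m) * c (Suc m))) (at t)"
proof -
  define d where "d m = c m / fact m" for m
  have "summable (\<lambda>m. d m * z ^ m)" for z :: 'a
  proof (rule summable_comparison_test')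
    show "summable (\<lambda>m. X * (inverse (fact m) * (K * norm z) ^ m))"
      by (intro summable_mult summable_exp)
    fix m
    have "norm (d m * z ^ m) = norm z ^ m / fact m * norm (c m)"
      by (simp add: d_def norm_mult norm_divide norm_power)
    also have "\<dots> \<le> norm z ^ m / fact m * (X * K ^ m)"
      by (intro mult_left_mono bound) auto
    also have "\<dots> = X * (inverse (fact m) * (K * norm z) ^ m)"
      by (simp add: power_mult_distrib field_simps)
    finally show "norm (d m * z ^ m) \<le> X * (inverse (fact m) * (K * norm z) ^ m)" .
  qed
  then have "((\<lambda>t. \<Sum>m. d m * of_real t ^ m) has_vector_derivative (\<Sum>m. diffs d m * of_real t ^ m)) (at t)"
    by (rule has_vector_derivative_real_field[OF termdiffs_strong_converges_everywhere])
  moreover have "d m * of_real t ^ m = of_real (t ^ m / fact m) * c m" for m t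
    by (simp add: d_def field_simps)
  moreover have "diffs d m * of_real t ^ m = of_real (t ^ m / fact m) * c (Suc m)" for m
    by (simp add: diffs_def d_def field_simps del: of_nat_Suc)
  ultimately show ?thesis by simp
qed

text \<open>Variation of constants: \<open>e\<^bsup>l t\<^esup> f(t)\<close> has derivative \<open>e\<^bsup>l t\<^esup> b(t)\<close>, so after the forcing
  \<open>b\<close> has become smaller than \<open>l \<epsilon>\<close>, \<open>f\<close> stays within \<open>\<epsilon>\<close> up to an exponentially decaying term.\<close>

lemma tendsto_zero_of_damped_forcing:
  fixes f b :: "real \<Rightarrow> 'a::real_normed_vector"
  assumes l: "0 < l"
    and f': "\<And>t. (f has_vector_derivative (b t - l *\<^sub>R f t)) (at t)"
    and b: "(b \<longlongrightarrow> 0) at_top"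
  shows "(f \<longlongrightarrow> 0) at_top"
proof (rule tendstoI)
  fix e :: real assume "0 < e"
  define \<epsilon> where "\<epsilon> = e / 3"
  have \<epsilon>: "0 < \<epsilon>" using \<open>0 < e\<close> by (simp add: \<epsilon>_def)
  have "eventually (\<lambda>t. dist (b t) 0 < l * \<epsilon>) at_top"
    using b l \<epsilon> by (simp add: tendsto_iff)
  then obtain T where T: "\<And>t. T \<le> t \<Longrightarrow> norm (b t) < l * \<epsilon>"
    by (auto simp: eventually_at_top_linorder)
  define h where "h t = exp (l * t) *\<^sub>R f t" for t
  have h': "(h has_vector_derivative exp (l * t) *\<^sub>R b t) (at t)" for t
  proof -
    have "(h has_vector_derivative
        exp (l * t) *\<^sub>R (b t - l *\<^sub>R f t) + (exp (l * t) * l) *\<^sub>R f t) (at t)"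
      unfolding h_def by (rule has_vector_derivative_scaleR[OF _ f']) (auto intro!: derivative_eq_intros)
    then show ?thesis by (simp add: algebra_simps)
  qed
  define \<phi> where "\<phi> t = \<epsilon> * exp (l * t)" for t
  have \<phi>': "(\<phi> has_vector_derivative \<epsilon> * (exp (l * t) * l)) (at t)" for t
    unfolding \<phi>_def has_real_derivative_iff_has_vector_derivative[symmetric]
    by (auto intro!: derivative_eq_intros)
  have bound: "norm (f t) \<le> exp (- l * t) * norm (h T) + \<epsilon>" if "T < t" for t
  proof -
    have "norm (h t - h T) \<le> \<phi> t - \<phi> T"
    proof (rule differentiable_bound_general[OF that])
      show "continuous_on {T..t} h"
        by (rule continuous_on_vector_derivative) (use h' has_vector_derivative_at_within in blast)
      show "continuous_on {T..t} \<phi>"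
        by (rule continuous_on_vector_derivative) (use \<phi>' has_vector_derivative_at_within in blast)
      show "norm (exp (l * x) *\<^sub>R b x) \<le> \<epsilon> * (exp (l * x) * l)" if "T < x" "x < t" for x
        using T[of x] that by (simp add: algebra_simps)
    qed (use h' \<phi>' in auto)
    moreover have "0 \<le> \<phi> T" using \<epsilon> by (simp add: \<phi>_def)
    ultimately have "norm (h t) \<le> norm (h T) + \<epsilon> * exp (l * t)"
      using norm_triangle_ineq2[of "h t" "h T"] unfolding \<phi>_def by linarith
    moreover have "f t = exp (- l * t) *\<^sub>R h t"
      by (simp add: h_def exp_minus_inverse[symmetric] exp_add[symmetric])
    ultimately have "norm (f t) \<le> exp (- l * t) * (norm (h T) + \<epsilon> * exp (l * t))"
      by (simp add: mult_left_mono)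
    also have "\<dots> = exp (- l * t) * norm (h T) + \<epsilon>"
      by (simp add: algebra_simps exp_add[symmetric])
    finally show ?thesis .
  qed
  have "((\<lambda>t. exp (- l * t) * norm (h T)) \<longlongrightarrow> 0 * norm (h T)) at_top"
    by (intro tendsto_intros filterlim_compose[OF exp_at_bot]
        filterlim_tendsto_neg_mult_at_bot[OF tendsto_const] filterlim_ident) (use l in auto)
  then have "eventually (\<lambda>t. exp (- l * t) * norm (h T) < \<epsilon>) at_top"
    using \<epsilon> by (simp add: order_tendstoD(2))
  moreover have "eventually (\<lambda>t. T < t) at_top" by (rule eventually_gt_at_top)
  ultimately show "eventually (\<lambda>t. dist (f t) 0 < e) at_top"
  proof eventually_elim
    case (elim t)
    then have "norm (f t) < e" using bound[of t] \<open>0 < e\<close> unfolding \<epsilon>_def by linarith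
    then show ?case by simp
  qed
qed

lemma mat_entries_bounded:
  "\<exists>X\<ge>0. \<forall>a<N. \<forall>b<N. norm (A $$ (a, b)) \<le> (X::real)"
proof (intro exI conjI allI impI)
  let ?X = "\<Sum>a<N. \<Sum>b<N. norm (A $$ (a, b))"
  show "0 \<le> ?X" by (intro sum_nonneg) simp
  fix a b assume "a < N" "b < N"
  then have "norm (A $$ (a, b)) \<le> (\<Sum>b<N. norm (A $$ (a, b)))"
    by (intro member_le_sum) auto
  also have "\<dots> \<le> ?X"
    using \<open>a < N\<close> by (intro member_le_sum[where f = "\<lambda>a. \<Sum>b<N. norm (A $$ (a, b))"]) (auto intro: sum_nonneg)
  finally show "norm (A $$ (a, b)) \<le> ?X" .
qed

lemma lindblad_power_carrier:
  "\<rho> \<in> carrier_mat (2 ^ n) (2 ^ n) \<Longrightarrow> (lindblad n ^^ m) \<rho> \<in> carrier_mat (2 ^ n) (2 ^ n)"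
  by (cases m) (simp_all add: lindblad_carrier)

lemma norm_index_lindblad_power_le:
  assumes "\<rho> \<in> carrier_mat (2 ^ n) (2 ^ n)"
    and "\<And>a b. a < 2 ^ n \<Longrightarrow> b < 2 ^ n \<Longrightarrow> norm (\<rho> $$ (a, b)) \<le> X" "0 \<le> X"
    and "i < 2 ^ n" "j < 2 ^ n"
  shows "norm ((lindblad n ^^ m) \<rho> $$ (i, j)) \<le> X * (2 * real n) ^ m"
  using assms(4,5)
proof (induction m arbitrary: i j)
  case 0
  then show ?case using assms(2) by simp
next
  case (Suc m)
  have "norm (lindblad n ((lindblad n ^^ m) \<rho>) $$ (i, j)) \<le> 2 * real n * (X * (2 * real n) ^ m)"
    using assms(3) by (intro norm_index_lindblad_le lindblad_power_carrier assms(1) Suc) auto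
  then show ?case by (simp add: algebra_simps)
qed

lemma lindblad_power_series_bound:
  assumes "\<rho> \<in> carrier_mat (2 ^ n) (2 ^ n)"
  obtains X where "\<And>a b m. a < 2 ^ n \<Longrightarrow> b < 2 ^ n \<Longrightarrow>
    norm ((lindblad n ^^ m) \<rho> $$ (a, b)) \<le> X * (2 * real n) ^ m"
proof -
  obtain X where "0 \<le> X" "\<forall>a<2 ^ n. \<forall>b<2 ^ n. norm (\<rho> $$ (a, b)) \<le> X"
    using mat_entries_bounded by blast
  then show thesis by (intro that norm_index_lindblad_power_le[OF assms]) auto
qed

lemma summable_lindblad_evol_series:
  assumes "\<rho> \<in> carrier_mat (2 ^ n) (2 ^ n)" "a < 2 ^ n" "b < 2 ^ n"
  shows "summable (\<lambda>m. of_real (t ^ m / fact m) * (lindblad n ^^ m) \<rho> $$ (a, b))"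
proof -
  obtain X where "\<And>a b m. a < 2 ^ n \<Longrightarrow> b < 2 ^ n \<Longrightarrow>
      norm ((lindblad n ^^ m) \<rho> $$ (a, b)) \<le> X * (2 * real n) ^ m"
    using lindblad_power_series_bound[OF assms(1)] by blast
  then show ?thesis
    using assms(2,3) by (intro summable_exp_series_bounded[where K = "2 * real n"]) auto
qed

lemma index_lindblad_evol:
  "i < 2 ^ n \<Longrightarrow> j < 2 ^ n \<Longrightarrow>
    lindblad_evol n t \<rho> $$ (i, j) = (\<Sum>m. of_real (t ^ m / fact m) * (lindblad n ^^ m) \<rho> $$ (i, j))"
  unfolding lindblad_evol_def by simp

lemma lindblad_evol_carrier: "lindblad_evol n t \<rho> \<in> carrier_mat (2 ^ n) (2 ^ n)"
  unfolding lindblad_evol_def by simp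

text \<open>The Lindbladian is a finite linear combination of entries, so it commutes with entrywise
  convergent series.\<close>

lemma index_lindblad_suminf:
  assumes carrier: "\<And>m. A m \<in> carrier_mat (2 ^ n) (2 ^ n)"
    and summable: "\<And>a b. a < 2 ^ n \<Longrightarrow> b < 2 ^ n \<Longrightarrow> summable (\<lambda>m. w m * A m $$ (a, b))"
    and ij: "i < 2 ^ n" "j < 2 ^ n"
  shows "lindblad n (mat (2 ^ n) (2 ^ n) (\<lambda>(a, b). \<Sum>m. w m * A m $$ (a, b))) $$ (i, j)
    = (\<Sum>m. w m * lindblad n (A m) $$ (i, j))"
proof -
  let ?S = "mat (2 ^ n) (2 ^ n) (\<lambda>(a, b). \<Sum>m. w m * A m $$ (a, b))"
  let ?J = "\<lambda>k m. if aligned n k i \<and> aligned n k j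
    then w m * A m $$ (flip_qubit n k i, flip_qubit n k j) else 0"
  have flip_less: "flip_qubit n k i < 2 ^ n" "flip_qubit n k j < 2 ^ n" if "k \<in> {1..n-1}" for k
    using that ij by (auto intro: flip_qubit_less)
  have summable_J: "summable (?J k)" if "k \<in> {1..n-1}" for k
    using summable[OF flip_less[OF that]] by (cases "aligned n k i \<and> aligned n k j") simp_all
  have "jump_term n ?S i j = (\<Sum>k\<in>{1..n-1}. \<Sum>m. ?J k m)"
    unfolding jump_term_def using flip_less by (intro sum.cong) auto
  also have "\<dots> = (\<Sum>m. \<Sum>k\<in>{1..n-1}. ?J k m)"
    using summable_J by (rule suminf_sum[symmetric])
  also have "\<dots> = (\<Sum>m. w m * jump_term n (A m) i j)"
    unfolding jump_term_def sum_distrib_left by (simp add: if_distrib cong: if_cong)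
  finally have jump: "jump_term n ?S i j = (\<Sum>m. w m * jump_term n (A m) i j)" .
  have "summable (\<lambda>m. \<Sum>k\<in>{1..n-1}. ?J k m)"
    using summable_J by (rule summable_sum)
  then have summable_jump: "summable (\<lambda>m. w m * jump_term n (A m) i j)"
    unfolding jump_term_def sum_distrib_left by (simp add: if_distrib cong: if_cong)
  have "lindblad n ?S $$ (i, j)
      = jump_term n ?S i j - of_real (decay_rate n i j) * (\<Sum>m. w m * A m $$ (i, j))"
    using ij by (simp add: index_lindblad)
  also have "\<dots> = (\<Sum>m. w m * jump_term n (A m) i j - of_real (decay_rate n i j) * (w m * A m $$ (i, j)))"
    unfolding jump suminf_mult[OF summable[OF ij], symmetric]
    by (rule suminf_diff[OF summable_jump summable_mult[OF summable[OF ij]]])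
  also have "\<dots> = (\<Sum>m. w m * lindblad n (A m) $$ (i, j))"
    using carrier ij by (simp add: index_lindblad algebra_simps)
  finally show ?thesis .
qed

lemma lindblad_evol_has_vector_derivative:
  assumes "\<rho> \<in> carrier_mat (2 ^ n) (2 ^ n)" "i < 2 ^ n" "j < 2 ^ n"
  shows "((\<lambda>t. lindblad_evol n t \<rho> $$ (i, j)) has_vector_derivative
    lindblad n (lindblad_evol n t \<rho>) $$ (i, j)) (at t)"
proof -
  obtain X where X: "\<And>a b m. a < 2 ^ n \<Longrightarrow> b < 2 ^ n \<Longrightarrow>
      norm ((lindblad n ^^ m) \<rho> $$ (a, b)) \<le> X * (2 * real n) ^ m"
    using lindblad_power_series_bound[OF assms(1)] by blast
  have "((\<lambda>t. \<Sum>m. of_real (t ^ m / fact m) * (lindblad n ^^ m) \<rho> $$ (i, j)) has_vector_derivative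
      (\<Sum>m. of_real (t ^ m / fact m) * lindblad n ((lindblad n ^^ m) \<rho>) $$ (i, j))) (at t)"
    using has_vector_derivative_exp_series[OF X[OF assms(2,3)]] by simp
  moreover have "lindblad n (lindblad_evol n t \<rho>) $$ (i, j)
      = (\<Sum>m. of_real (t ^ m / fact m) * lindblad n ((lindblad n ^^ m) \<rho>) $$ (i, j))"
    unfolding lindblad_evol_def
    by (rule index_lindblad_suminf[OF lindblad_power_carrier[OF assms(1)]
          summable_lindblad_evol_series[OF assms(1)] assms(2,3)])
  ultimately show ?thesis
    using assms(2,3) by (simp add: index_lindblad_evol)
qed

lemma mtrace_lindblad_evol:
  assumes "\<rho> \<in> carrier_mat (2 ^ n) (2 ^ n)"
  shows "mtrace (lindblad_evol n t \<rho>) = mtrace \<rho>"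
proof -
  let ?w = "\<lambda>m. of_real (t ^ m / fact m) :: complex"
  have "mtrace (lindblad_evol n t \<rho>) = (\<Sum>i<2 ^ n. \<Sum>m. ?w m * (lindblad n ^^ m) \<rho> $$ (i, i))"
    using lindblad_evol_carrier[of n t \<rho>] by (simp add: mtrace_def index_lindblad_evol)
  also have "\<dots> = (\<Sum>m. \<Sum>i<2 ^ n. ?w m * (lindblad n ^^ m) \<rho> $$ (i, i))"
    by (rule suminf_sum[symmetric], rule summable_lindblad_evol_series[OF assms]) auto
  also have "\<dots> = (\<Sum>m. ?w m * mtrace ((lindblad n ^^ m) \<rho>))"
  proof (rule suminf_cong)
    fix m
    have "dim_row ((lindblad n ^^ m) \<rho>) = 2 ^ n"
      by (rule carrier_matD(1)[OF lindblad_power_carrier[OF assms]])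
    then show "(\<Sum>i<2 ^ n. ?w m * (lindblad n ^^ m) \<rho> $$ (i, i)) = ?w m * mtrace ((lindblad n ^^ m) \<rho>)"
      unfolding mtrace_def sum_distrib_left by simp
  qed
  also have "\<dots> = (\<Sum>m. if m = 0 then mtrace \<rho> else 0)"
  proof (rule suminf_cong)
    fix m
    show "?w m * mtrace ((lindblad n ^^ m) \<rho>) = (if m = 0 then mtrace \<rho> else 0)"
      by (cases m) (simp_all add: mtrace_lindblad lindblad_power_carrier assms)
  qed
  also have "\<dots> = mtrace \<rho>"
    using sums_single[of 0 "\<lambda>_. mtrace \<rho>"] by (simp add: sums_iff)
  finally show ?thesis .
qed

lemma flip_invariant_lindblad_evol:
  assumes "\<rho> \<in> carrier_mat (2 ^ n) (2 ^ n)" "flip_invariant n \<rho>"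
  shows "flip_invariant n (lindblad_evol n t \<rho>)"
proof -
  have "flip_invariant n ((lindblad n ^^ m) \<rho>)" for m
    by (induction m) (simp_all add: assms flip_invariant_lindblad lindblad_power_carrier)
  then show ?thesis
    using flip_all_less by (simp add: flip_invariant_def index_lindblad_evol)
qed

lemma lindblad_evol_tendsto_zero_if_wall:
  assumes \<rho>: "\<rho> \<in> carrier_mat (2 ^ n) (2 ^ n)"
  shows "i < 2 ^ n \<Longrightarrow> j < 2 ^ n \<Longrightarrow> \<exists>k\<in>{1..n-1}. \<not> aligned n k i \<or> \<not> aligned n k j \<Longrightarrow>
    ((\<lambda>t. lindblad_evol n t \<rho> $$ (i, j)) \<longlongrightarrow> 0) at_top"
proof (induction i arbitrary: j
    rule: measure_induct_rule[where f = "\<lambda>i. (\<Sum>k\<in>{1..n-1}. k) - wall_potential n i"])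
  case (less i)
  have forcing: "((\<lambda>t. jump_term n (lindblad_evol n t \<rho>) i j) \<longlongrightarrow> 0) at_top"
    unfolding jump_term_def
  proof (intro tendsto_null_sum)
    fix k assume k: "k \<in> {1..n-1}"
    show "((\<lambda>t. if aligned n k i \<and> aligned n k j
        then lindblad_evol n t \<rho> $$ (flip_qubit n k i, flip_qubit n k j) else 0) \<longlongrightarrow> 0) at_top"
    proof (cases "aligned n k i \<and> aligned n k j")
      case True
      have "wall_potential n i < wall_potential n (flip_qubit n k i)"
        using True by (intro wall_potential_flip_qubit k) simp
      then have "(\<Sum>k\<in>{1..n-1}. k) - wall_potential n (flip_qubit n k i)
          < (\<Sum>k\<in>{1..n-1}. k) - wall_potential n i"
        using wall_potential_le[of n "flip_qubit n k i"] by (intro diff_less_mono2) auto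
      moreover have "\<not> aligned n k (flip_qubit n k i)"
        using True aligned_flip_qubit[OF k] by simp
      moreover have "flip_qubit n k i < 2 ^ n" "flip_qubit n k j < 2 ^ n"
        using k less.prems(1,2) by (auto intro: flip_qubit_less)
      ultimately have "((\<lambda>t. lindblad_evol n t \<rho> $$ (flip_qubit n k i, flip_qubit n k j)) \<longlongrightarrow> 0) at_top"
        using k by (intro less.IH) blast+
      then show ?thesis using True by simp
    next
      case False
      then show ?thesis by (simp only: if_False tendsto_const)
    qed
  qed
  obtain k where "k \<in> {1..n-1}" "\<not> aligned n k i \<or> \<not> aligned n k j"
    using less.prems by blast
  then have rate: "0 < decay_rate n i j" by (rule decay_rate_pos)
  have derivative: "((\<lambda>t. lindblad_evol n t \<rho> $$ (i, j)) has_vector_derivative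
      jump_term n (lindblad_evol n t \<rho>) i j - decay_rate n i j *\<^sub>R lindblad_evol n t \<rho> $$ (i, j)) (at t)"
    for t
    using lindblad_evol_has_vector_derivative[OF \<rho> less.prems(1,2), of t]
      index_lindblad[OF lindblad_evol_carrier[of n t \<rho>] less.prems(1,2)]
    by (simp add: scaleR_conv_of_real)
  show ?case by (rule tendsto_zero_of_damped_forcing[OF rate derivative forcing])
qed

lemma flip_all_zero: "flip_all n 0 = mask n"
  by (simp add: flip_all_def)

lemma flip_invariant_corners:
  assumes "flip_invariant n \<rho>" "i \<in> {0, mask n}" "j \<in> {0, mask n}"
  shows "\<rho> $$ (i, j) = \<rho> $$ (0, 0)"
proof -
  have "mask n < (2::nat) ^ n" by (simp add: mask_eq_exp_minus_1)
  then show ?thesis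
    using assms unfolding flip_invariant_def flip_all_zero[symmetric] by force
qed

lemma index_sigmax_n:
  assumes "i < 2 ^ n" "a < 2 ^ n"
  shows "sigmax_n n $$ (i, a) = (if a = flip_all n i then 1 else 0)"
proof -
  have "(\<forall>q\<in>{1..n}. qbit n q i \<noteq> qbit n q a) \<longleftrightarrow> a = flip_all n i"
  proof
    assume differ: "\<forall>q\<in>{1..n}. qbit n q i \<noteq> qbit n q a"
    show "a = flip_all n i"
    proof (rule qbit_eqI[OF assms(2) flip_all_less[OF assms(1)]])
      fix q assume q: "q \<in> {1..n}"
      have "qbit n q i \<noteq> qbit n q a" using differ q by blast
      then show "qbit n q a = qbit n q (flip_all n i)"
        using qbit_cases[of n q i] qbit_cases[of n q a] qbit_flip_all[OF q] by auto
    qed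
  next
    assume a: "a = flip_all n i"
    show "\<forall>q\<in>{1..n}. qbit n q i \<noteq> qbit n q a"
    proof
      fix q assume q: "q \<in> {1..n}"
      show "qbit n q i \<noteq> qbit n q a"
        using a qbit_flip_all[OF q] qbit_cases[of n q i] by auto
    qed
  qed
  then show ?thesis unfolding sigmax_n_def using assms by simp
qed

text \<open>Applying \<open>\<sigma>\<^sub>x\<^sup>\<otimes>\<^sup>n\<close> to the \<open>j\<close>-th column of \<open>\<rho>\<close> permutes its entries by \<open>flip_all\<close>.\<close>

lemma index_flip_all_if_supported_in_Hplus:
  assumes \<rho>: "\<rho> \<in> carrier_mat (2 ^ n) (2 ^ n)" and supp: "supported_in_Hplus n \<rho>"
    and ij: "i < 2 ^ n" "j < 2 ^ n"
  shows "\<rho> $$ (flip_all n i, j) = \<rho> $$ (i, j)"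
proof -
  let ?v = "\<rho> *\<^sub>v unit_vec (2 ^ n) j"
  have v: "dim_vec ?v = 2 ^ n" "\<And>l. l < 2 ^ n \<Longrightarrow> ?v $ l = \<rho> $$ (l, j)"
    using \<rho> ij by auto
  have "(sigmax_n n *\<^sub>v ?v) $ i = (\<Sum>l\<in>{0..<2 ^ n}. sigmax_n n $$ (i, l) * ?v $ l)"
    using ij v by (simp add: sigmax_n_def scalar_prod_def)
  also have "\<dots> = (\<Sum>l\<in>{0..<2 ^ n}. if l = flip_all n i then ?v $ l else 0)"
    by (rule sum.cong) (use ij in \<open>auto simp: index_sigmax_n\<close>)
  also have "\<dots> = ?v $ flip_all n i"
    using flip_all_less[OF ij(1)] by (simp add: sum.delta')
  finally have "?v $ flip_all n i = ?v $ i"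
    using supp ij unfolding supported_in_Hplus_def by simp
  then show ?thesis using v flip_all_less[OF ij(1)] ij by simp
qed

lemma flip_invariant_if_supported_in_Hplus:
  assumes \<rho>: "\<rho> \<in> carrier_mat (2 ^ n) (2 ^ n)" and herm: "mat_adjoint \<rho> = \<rho>"
    and supp: "supported_in_Hplus n \<rho>"
  shows "flip_invariant n \<rho>"
  unfolding flip_invariant_def
proof (intro allI impI conjI)
  fix i j :: nat assume ij: "i < 2 ^ n" "j < 2 ^ n"
  have cnj_sym: "\<rho> $$ (a, b) = cnj (\<rho> $$ (b, a))" if "a < 2 ^ n" "b < 2 ^ n" for a b
    using index_mat_adjoint[OF \<rho> that] herm by simp
  show "\<rho> $$ (flip_all n i, j) = \<rho> $$ (i, j)"
    by (rule index_flip_all_if_supported_in_Hplus[OF \<rho> supp ij])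
  show "\<rho> $$ (i, flip_all n j) = \<rho> $$ (i, j)"
    using index_flip_all_if_supported_in_Hplus[OF \<rho> supp ij(2,1)] cnj_sym[OF ij(1) flip_all_less[OF ij(2)]]
      cnj_sym[OF ij] by simp
qed

lemma index_ghz_proj:
  assumes "i < 2 ^ n" "j < 2 ^ n"
  shows "ghz_proj n $$ (i, j) = (if i \<in> {0, mask n} \<and> j \<in> {0, mask n} then 1/2 else 0)"
proof -
  have "complex_of_real (1 / sqrt 2) * cnj (complex_of_real (1 / sqrt 2)) = 1/2"
    by (simp flip: of_real_mult)
  then show ?thesis
    using assms unfolding ghz_proj_def ghz_vec_def by (auto simp: mask_eq_exp_minus_1)
qed

lemma lindblad_evol_tendsto_corner:
  assumes \<rho>: "\<rho> \<in> carrier_mat (2 ^ n) (2 ^ n)" and inv: "flip_invariant n \<rho>"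
    and tr: "mtrace \<rho> = 1" and "1 \<le> n"
  shows "((\<lambda>t. lindblad_evol n t \<rho> $$ (0, 0)) \<longlongrightarrow> 1/2) at_top"
proof -
  let ?E = "\<lambda>t. lindblad_evol n t \<rho>"
  define R where "R t = (\<Sum>i\<in>{..<2 ^ n} - {0, mask n}. ?E t $$ (i, i))" for t
  have R: "(R \<longlongrightarrow> 0) at_top"
    unfolding R_def
  proof (intro tendsto_null_sum)
    fix i :: nat assume "i \<in> {..<2 ^ n} - {0, mask n}"
    then have "i < 2 ^ n" "\<exists>k\<in>{1..n-1}. \<not> aligned n k i \<or> \<not> aligned n k i"
      using exists_domain_wall[of i n] by auto
    then show "((\<lambda>t. ?E t $$ (i, i)) \<longlongrightarrow> 0) at_top"
      by (intro lindblad_evol_tendsto_zero_if_wall[OF \<rho>])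
  qed
  have mask: "mask n \<noteq> (0::nat)" "mask n < (2::nat) ^ n"
    using \<open>1 \<le> n\<close> one_less_power[of "2::nat" n] by (simp_all add: mask_eq_exp_minus_1)
  have corner: "?E t $$ (0, 0) = (1 - R t) / 2" for t
  proof -
    have "1 = (\<Sum>i<2 ^ n. ?E t $$ (i, i))"
      using mtrace_lindblad_evol[OF \<rho>, of t] tr lindblad_evol_carrier[of n t \<rho>]
      by (simp add: mtrace_def)
    also have "\<dots> = R t + (\<Sum>i\<in>{0, mask n}. ?E t $$ (i, i))"
      unfolding R_def by (rule sum.subset_diff) (use mask in auto)
    also have "\<dots> = R t + 2 * ?E t $$ (0, 0)"
      using mask flip_invariant_corners[OF flip_invariant_lindblad_evol[OF \<rho> inv], of "mask n" "mask n"]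
      by simp
    finally show ?thesis by (simp add: field_simps)
  qed
  have "((\<lambda>t. (1 - R t) / 2) \<longlongrightarrow> (1 - 0) / 2) at_top"
    by (intro tendsto_intros R) simp
  then show ?thesis unfolding corner by simp
qed

lemma lindblad_evol_tendsto_ghz_proj:
  assumes \<rho>: "\<rho> \<in> carrier_mat (2 ^ n) (2 ^ n)" and inv: "flip_invariant n \<rho>"
    and tr: "mtrace \<rho> = 1" and "1 \<le> n" and ij: "i < 2 ^ n" "j < 2 ^ n"
  shows "((\<lambda>t. lindblad_evol n t \<rho> $$ (i, j)) \<longlongrightarrow> ghz_proj n $$ (i, j)) at_top"
proof (cases "i \<in> {0, mask n} \<and> j \<in> {0, mask n}")
  case True
  then have "lindblad_evol n t \<rho> $$ (i, j) = lindblad_evol n t \<rho> $$ (0, 0)" for t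
    using flip_invariant_corners[OF flip_invariant_lindblad_evol[OF \<rho> inv]] by blast
  then show ?thesis
    using True ij lindblad_evol_tendsto_corner[OF \<rho> inv tr \<open>1 \<le> n\<close>] by (simp add: index_ghz_proj)
next
  case False
  then have "\<exists>k\<in>{1..n-1}. \<not> aligned n k i \<or> \<not> aligned n k j"
    using exists_domain_wall ij by blast
  then have "((\<lambda>t. lindblad_evol n t \<rho> $$ (i, j)) \<longlongrightarrow> 0) at_top"
    by (rule lindblad_evol_tendsto_zero_if_wall[OF \<rho> ij])
  moreover have "ghz_proj n $$ (i, j) = 0"
    using False ij by (simp add: index_ghz_proj)
  ultimately show ?thesis by simp
qed

theorem mainTheorem14:
  fixes n :: nat and \<rho>0 :: "complex mat"
  assumes "n \<ge> 3"
    and "density_op (2 ^ n) \<rho>0"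
    and "supported_in_Hplus n \<rho>0"
  shows "\<forall>i < 2 ^ n. \<forall>j < 2 ^ n.
           ((\<lambda>t. lindblad_evol n t \<rho>0 $$ (i, j)) \<longlongrightarrow> ghz_proj n $$ (i, j)) at_top"
proof (intro allI impI)
  fix i j :: nat assume "i < 2 ^ n" "j < 2 ^ n"
  moreover have "\<rho>0 \<in> carrier_mat (2 ^ n) (2 ^ n)" "mat_adjoint \<rho>0 = \<rho>0" "mtrace \<rho>0 = 1"
    using assms(2) unfolding density_op_def by auto
  ultimately show "((\<lambda>t. lindblad_evol n t \<rho>0 $$ (i, j)) \<longlongrightarrow> ghz_proj n $$ (i, j)) at_top"
    using assms(1,3) by (intro lindblad_evol_tendsto_ghz_proj flip_invariant_if_supported_in_Hplus) auto
qed

end
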